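(* Let $(X_n,\|\cdot\|_n)_{n\ge1}$ be a sequence of Banach spaces and let $(X,\|\cdot\|)$ be the space defined in the context. (i) Let $m\ge1$ and $x_n\in X_n$ for $n=1,\dots,m$ with $\sum_{n=1}^m\|x_n\|_n>0$. Then there exist $d_1,\dots,d_m\in(0,1]$ such that $\|(x_1,\dots,x_m)\|=\sum_{n=1}^m d_n\|x_n\|_n$. (ii) Let $x=(x_1,x_2,\dots)\in X$ and suppose there exist $c>0$ and $k\in\mathbb{N}$ such that $\frac{\|x_n\|_n}{n}<c\le\|(x_1,\dots,x_k)\|$ for every $n>k$. Then $$\|x\|=\|(x_1,\dots,x_k)\|+\sum_{n=k+1}^\infty\Big(1-\frac1{n+1}\Big)\|x_n\|_n.$$ (iii) Let $x=(x_1,x_2,\dots)$ be a nonzero vector of $X$. Then there exists $k\in\mathbb{N}$ such that $$\|x\|=\|(x_1,\dots,x_k)\|+\sum_{n=k+1}^\infty\Big(1-\frac1{n+1}\Big)\|x_n\|_n.$$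
   Context: $c_{00}((X_n))$ is the vector space of sequences $(x_1,x_2,\dots)$ with $x_k\in X_k$ and only finitely many $x_k\ne0$; $(x_1,\dots,x_n)$ denotes $(x_1,\dots,x_n,0,0,\dots)$. On $c_{00}((X_n))$ define inductively $\|(x_1)\|=\|x_1\|_1$ (the norm of $X_1$) and, for $n\ge2$, $$\|(x_1,\dots,x_n)\|=\Big(1-\tfrac{1}{n+1}\Big)\big(\|x_n\|_n+\|(x_1,\dots,x_{n-1})\|\big)+\tfrac{1}{n+1}\max\Big\{\tfrac{\|x_n\|_n}{n},\ \|(x_1,\dots,x_{n-1})\|\Big\}.$$ $X$ is the completion of $(c_{00}((X_n)),\|\cdot\|)$; since $\frac12\sum\|x_n\|_n\le\|(x_n)\|\le\sum\|x_n\|_n$ on $c_{00}((X_n))$, $X$ is identified with the space of sequences $x=(x_n)$, $x_n\in X_n$, with $\sum_n\|x_n\|_n<\infty$, and $\|x\|=\lim_k\|(x_1,\dots,x_k)\|$. *)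

theory Defs
  imports "HOL-Analysis.Analysis"
begin

text \<open>The Banach spaces X_n (n \<ge> 1) are modelled as subspaces Xs n of a common real
  vector space 'a, each carrying its own norm nrm n; completeness is stated explicitly.\<close>

definition is_norm_on :: "'a::real_vector set \<Rightarrow> ('a \<Rightarrow> real) \<Rightarrow> bool" where
  "is_norm_on S N \<longleftrightarrow> subspace S \<and>
     (\<forall>x\<in>S. N x \<ge> 0) \<and> (\<forall>x\<in>S. N x = 0 \<longleftrightarrow> x = 0) \<and>
     (\<forall>x\<in>S. \<forall>y\<in>S. N (x + y) \<le> N x + N y) \<and>
     (\<forall>x\<in>S. \<forall>c::real. N (c *\<^sub>R x) = \<bar>c\<bar> * N x)"

definition is_banach_on :: "'a::real_vector set \<Rightarrow> ('a \<Rightarrow> real) \<Rightarrow> bool" where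
  "is_banach_on S N \<longleftrightarrow> is_norm_on S N \<and>
     (\<forall>f. (\<forall>i. f i \<in> S) \<and> (\<forall>e>0. \<exists>M. \<forall>p\<ge>M. \<forall>q\<ge>M. N (f p - f q) < e)
        \<longrightarrow> (\<exists>l\<in>S. (\<lambda>i. N (f i - l)) \<longlonglongrightarrow> 0))"

text \<open>normk N x k = \<parallel>(x_1,...,x_k)\<parallel> (indices start at 1; x 0 is ignored; normk N x 0 = 0).\<close>
fun normk :: "(nat \<Rightarrow> 'a \<Rightarrow> real) \<Rightarrow> (nat \<Rightarrow> 'a) \<Rightarrow> nat \<Rightarrow> real" where
  "normk N x 0 = 0"
| "normk N x (Suc n) =
     (if n = 0 then N 1 (x 1)
      else (1 - 1 / real (n + 2)) * (N (n + 1) (x (n + 1)) + normk N x n)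
           + (1 / real (n + 2)) * max (N (n + 1) (x (n + 1)) / real (n + 1)) (normk N x n))"

definition in_X :: "(nat \<Rightarrow> 'a set) \<Rightarrow> (nat \<Rightarrow> 'a \<Rightarrow> real) \<Rightarrow> (nat \<Rightarrow> 'a) \<Rightarrow> bool" where
  "in_X Xs N x \<longleftrightarrow> (\<forall>n\<ge>1. x n \<in> Xs n) \<and> summable (\<lambda>i. N (i + 1) (x (i + 1)))"

definition xnorm :: "(nat \<Rightarrow> 'a \<Rightarrow> real) \<Rightarrow> (nat \<Rightarrow> 'a) \<Rightarrow> real" where
  "xnorm N x = lim (\<lambda>k. normk N x k)"

definition tail :: "(nat \<Rightarrow> 'a \<Rightarrow> real) \<Rightarrow> (nat \<Rightarrow> 'a) \<Rightarrow> nat \<Rightarrow> real" where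
  "tail N x k = (\<Sum>i. (1 - 1 / real (i + k + 2)) * N (i + k + 1) (x (i + k + 1)))"

end

theory Submission
  imports Defs
begin

text \<open>Write \<open>a = \<parallel>x\<^sub>n\<^sub>+\<^sub>1\<parallel>\<close>, \<open>b = \<parallel>(x\<^sub>1,\<dots>,x\<^sub>n)\<parallel>\<close> and \<open>t = 1/(n+2)\<close>. Each step of the recursion
  replaces \<open>b\<close> by \<open>(1-t)(a+b) + t max(a/(n+1), b)\<close>, a combination of \<open>a\<close> and \<open>b\<close> with
  coefficients in \<open>(0,1]\<close>; this gives (i). Once \<open>a/(n+1) \<le> b\<close> for all later \<open>n\<close>, the maximum
  is always \<open>b\<close> (the partial norms increase), so each later step just adds \<open>(1-t)a\<close>, and
  passing to the limit gives (ii). For (iii), \<open>\<parallel>x\<^sub>n\<parallel>\<close> tends to zero while the partial norms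
  become positive, so the hypothesis of (ii) holds from some index on.\<close>

lemma is_banach_on_norm_nonneg: "is_banach_on S N \<Longrightarrow> y \<in> S \<Longrightarrow> N y \<ge> 0"
  by (simp add: is_banach_on_def is_norm_on_def)

lemma is_banach_on_norm_pos: "is_banach_on S N \<Longrightarrow> y \<in> S \<Longrightarrow> y \<noteq> 0 \<Longrightarrow> N y > 0"
  unfolding is_banach_on_def is_norm_on_def by (metis order_le_less)

lemma normk_eq_weighted_sum:
  assumes "m \<ge> 1"
  shows "\<exists>d. (\<forall>n\<in>{1..m}. 0 < d n \<and> d n \<le> 1) \<and> normk N x m = (\<Sum>n=1..m. d n * N n (x n))"
  using assms
proof (induction m rule: nat_induct_at_least)
  case base
  show ?case by (rule exI[of _ "\<lambda>_. 1"]) simp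
next
  case (Suc m)
  then obtain d where d: "\<forall>n\<in>{1..m}. 0 < d n \<and> d n \<le> 1"
    and IH: "normk N x m = (\<Sum>n=1..m. d n * N n (x n))" by blast
  define a where "a = N (m + 1) (x (m + 1))"
  define b where "b = normk N x m"
  define t where "t = 1 / real (m + 2)"
  define s :: real where "s = (if b \<le> a / real (m + 1) then 1 else 0)"
  \<comment> \<open>\<open>s\<close> selects the branch of the maximum, so that one weight formula covers both cases.\<close>
  have max_eq: "max (a / real (m + 1)) b = s * (a / real (m + 1)) + (1 - s) * b"
    by (simp add: s_def)
  define d' where "d' n = (if n = m + 1 then 1 - t + t * s / real (m + 1) else (1 - t * s) * d n)"
    for n
  have t: "0 < t" "t \<le> 1 / 2" using Suc.hyps by (auto simp: t_def field_simps)
  have s: "0 \<le> s" "s \<le> 1" by (auto simp: s_def)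
  have "t * s \<le> t" using mult_left_mono[OF s(2), of t] t by simp
  have last: "0 < 1 - t + t * s / real (m + 1)" "1 - t + t * s / real (m + 1) \<le> 1"
    using t s by (auto simp: divide_le_eq mult_le_cancel_left1 intro: add_pos_nonneg)
  have scale: "0 < 1 - t * s" "1 - t * s \<le> 1" using \<open>t * s \<le> t\<close> t s by (linarith, simp)
  have weights: "\<forall>n\<in>{1..Suc m}. 0 < d' n \<and> d' n \<le> 1"
  proof
    fix n assume n: "n \<in> {1..Suc m}"
    show "0 < d' n \<and> d' n \<le> 1"
    proof (cases "n = m + 1")
      case False
      then have "0 < d n" "d n \<le> 1" using n d by auto
      then show ?thesis using False scale by (simp add: d'_def mult_le_one)
    qed (use last in \<open>simp add: d'_def\<close>)
  qed
  have head: "(\<Sum>n=1..m. d' n * N n (x n)) = (1 - t * s) * b"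
    unfolding b_def IH sum_distrib_left by (rule sum.cong) (auto simp: d'_def)
  have "normk N x (Suc m) = (1 - t) * (a + b) + t * (s * (a / real (m + 1)) + (1 - s) * b)"
    using Suc.hyps max_eq by (simp add: a_def b_def t_def)
  also have "\<dots> = (\<Sum>n=1..Suc m. d' n * N n (x n))"
    using head by (simp add: d'_def a_def algebra_simps)
  finally show ?case using weights by blast
qed

lemma normk_pos:
  assumes nonneg: "\<And>n. n \<ge> 1 \<Longrightarrow> N n (x n) \<ge> 0"
    and "1 \<le> j" "j \<le> m" "N j (x j) > 0"
  shows "normk N x m > 0"
proof -
  obtain d where d: "\<forall>n\<in>{1..m}. 0 < d n \<and> d n \<le> 1"
    and eq: "normk N x m = (\<Sum>n=1..m. d n * N n (x n))"
    using normk_eq_weighted_sum[of m N x] assms(2,3) by auto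
  have "0 \<le> d n * N n (x n)" if "n \<in> {1..m}" for n
    using that d nonneg[of n] by (simp add: less_imp_le)
  moreover have "0 < d j * N j (x j)" using assms d by auto
  ultimately have "0 < (\<Sum>n=1..m. d n * N n (x n))"
    using assms by (intro sum_pos2[of _ j]) auto
  then show ?thesis by (simp add: eq)
qed

lemma incseq_normk:
  assumes nonneg: "\<And>n. n \<ge> 1 \<Longrightarrow> N n (x n) \<ge> 0"
  shows "incseq (normk N x)"
proof (rule incseq_SucI)
  fix n
  show "normk N x n \<le> normk N x (Suc n)"
  proof (cases "n = 0")
    case False
    define t where "t = 1 / real (n + 2)"
    have t: "0 \<le> t" "t \<le> 1" by (auto simp: t_def field_simps)
    have "normk N x n \<le> (1 - t) * N (n + 1) (x (n + 1)) + normk N x n"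
      using t nonneg[of "n + 1"] by simp
    also have "\<dots> \<le> (1 - t) * (N (n + 1) (x (n + 1)) + normk N x n)
        + t * max (N (n + 1) (x (n + 1)) / real (n + 1)) (normk N x n)"
      using t mult_left_mono[OF max.cobounded2 t(1),
          of "normk N x n" "N (n + 1) (x (n + 1)) / real (n + 1)"]
      by (simp add: algebra_simps)
    finally show ?thesis using False by (simp add: t_def)
  qed (use nonneg[of 1] in simp)
qed

lemma normk_Suc_below_threshold:
  assumes "n \<ge> 1" "N (n + 1) (x (n + 1)) / real (n + 1) \<le> normk N x n"
  shows "normk N x (Suc n) = normk N x n + (1 - 1 / real (n + 2)) * N (n + 1) (x (n + 1))"
  using assms by (simp add: max_absorb2 algebra_simps)

lemma normk_add_eq_partial_tail:
  assumes nonneg: "\<And>n. n \<ge> 1 \<Longrightarrow> N n (x n) \<ge> 0"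
    and "k \<ge> 1" and small: "\<forall>n>k. N n (x n) / real n \<le> normk N x k"
  shows "normk N x (j + k) = normk N x k +
     (\<Sum>i<j. (1 - 1 / real (i + k + 2)) * N (i + k + 1) (x (i + k + 1)))"
proof (induction j)
  case (Suc j)
  have "normk N x k \<le> normk N x (j + k)"
    using incseq_normk[of N x, OF nonneg] by (simp add: incseq_def)
  then have "N (j + k + 1) (x (j + k + 1)) / real (j + k + 1) \<le> normk N x (j + k)"
    using small[rule_format, of "j + k + 1"] by simp
  then have "normk N x (Suc (j + k)) =
      normk N x (j + k) + (1 - 1 / real (j + k + 2)) * N (j + k + 1) (x (j + k + 1))"
    using \<open>k \<ge> 1\<close> by (intro normk_Suc_below_threshold) simp_all
  then show ?case using Suc by simp
qed simp

lemma xnorm_eq_normk_add_tail: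
  assumes nonneg: "\<And>n. n \<ge> 1 \<Longrightarrow> N n (x n) \<ge> 0"
    and summable: "summable (\<lambda>i. N (i + 1) (x (i + 1)))"
    and "k \<ge> 1" and small: "\<forall>n>k. N n (x n) / real n \<le> normk N x k"
  shows "xnorm N x = normk N x k + tail N x k"
proof -
  define g where "g = (\<lambda>i. (1 - 1 / real (i + k + 2)) * N (i + k + 1) (x (i + k + 1)))"
  have "summable (\<lambda>i. N (i + k + 1) (x (i + k + 1)))"
    using summable_ignore_initial_segment[OF summable, of k] by (simp add: add.assoc)
  moreover have "norm (g i) \<le> N (i + k + 1) (x (i + k + 1))" for i
    using nonneg[of "i + k + 1"] by (simp add: g_def abs_mult field_simps mult_le_cancel_right1)
  ultimately have "summable g" by (intro summable_comparison_test[of g]) auto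
  then have "(\<lambda>j. normk N x k + (\<Sum>i<j. g i)) \<longlonglongrightarrow> normk N x k + suminf g"
    by (intro tendsto_intros summable_LIMSEQ)
  then have "(\<lambda>j. normk N x (j + k)) \<longlonglongrightarrow> normk N x k + tail N x k"
    using normk_add_eq_partial_tail[OF nonneg \<open>k \<ge> 1\<close> small]
    by (simp add: g_def tail_def)
  then have "normk N x \<longlonglongrightarrow> normk N x k + tail N x k"
    by (rule LIMSEQ_offset)
  then show ?thesis unfolding xnorm_def by (rule limI)
qed

lemma xnorm_eq_normk_add_tail_eventually:
  assumes nonneg: "\<And>n. n \<ge> 1 \<Longrightarrow> N n (x n) \<ge> 0"
    and summable: "summable (\<lambda>i. N (i + 1) (x (i + 1)))"
    and "j \<ge> 1" "N j (x j) > 0"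
  shows "\<exists>k\<ge>1. xnorm N x = normk N x k + tail N x k"
proof -
  have pos: "normk N x j > 0" using normk_pos[of N x, OF nonneg] assms(3,4) by blast
  have "(\<lambda>i. N (Suc i) (x (Suc i))) \<longlonglongrightarrow> 0" using summable_LIMSEQ_zero[OF summable] by simp
  then have "(\<lambda>n. N n (x n)) \<longlonglongrightarrow> 0" by (rule LIMSEQ_imp_Suc)
  from LIMSEQ_D[OF this pos] obtain M where M: "\<forall>n\<ge>M. \<bar>N n (x n)\<bar> < normk N x j" by auto
  define k where "k = max M j"
  have "normk N x j \<le> normk N x k"
    using incseq_normk[of N x, OF nonneg] by (simp add: incseq_def k_def)
  then have "N n (x n) / real n \<le> normk N x k" if "n > k" for n
  proof -
    have "N n (x n) / real n \<le> N n (x n)"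
      using that nonneg[of n] by (simp add: divide_le_eq mult_le_cancel_left1)
    also have "\<dots> < normk N x j" using that M by (auto simp: k_def abs_less_iff)
    finally show ?thesis using \<open>normk N x j \<le> normk N x k\<close> by simp
  qed
  then have "xnorm N x = normk N x k + tail N x k"
    using assms(3) by (intro xnorm_eq_normk_add_tail[of N x, OF nonneg summable]) (auto simp: k_def)
  then show ?thesis using assms(3) by (intro exI[of _ k]) (simp add: k_def)
qed

theorem proposition1p5:
  fixes Xs :: "nat \<Rightarrow> 'a::real_vector set" and N :: "nat \<Rightarrow> 'a \<Rightarrow> real"
  assumes banach: "\<And>n. n \<ge> 1 \<Longrightarrow> is_banach_on (Xs n) (N n)"
  shows
   "(\<forall>(m::nat) (x::nat \<Rightarrow> 'a). m \<ge> 1 \<and> (\<forall>n\<in>{1..m}. x n \<in> Xs n)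
        \<and> (\<Sum>n=1..m. N n (x n)) > 0 \<longrightarrow>
      (\<exists>d::nat \<Rightarrow> real. (\<forall>n\<in>{1..m}. 0 < d n \<and> d n \<le> 1)
          \<and> normk N x m = (\<Sum>n=1..m. d n * N n (x n))))
  \<and> (\<forall>(x::nat \<Rightarrow> 'a) (c::real) (k::nat). in_X Xs N x \<and> c > 0
        \<and> (\<forall>n>k. N n (x n) / real n < c \<and> c \<le> normk N x k) \<longrightarrow>
      xnorm N x = normk N x k + tail N x k)
  \<and> (\<forall>x::nat \<Rightarrow> 'a. in_X Xs N x \<and> (\<exists>n\<ge>1. x n \<noteq> 0) \<longrightarrow>
      (\<exists>k\<ge>1. xnorm N x = normk N x k + tail N x k))"
proof (intro conjI allI impI)
  have nonneg: "N n (x n) \<ge> 0" if "in_X Xs N x" "n \<ge> 1" for x n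
    using that banach is_banach_on_norm_nonneg unfolding in_X_def by blast
  show "\<exists>d. (\<forall>n\<in>{1..m}. 0 < d n \<and> d n \<le> 1) \<and> normk N x m = (\<Sum>n=1..m. d n * N n (x n))"
    if "m \<ge> 1 \<and> (\<forall>n\<in>{1..m}. x n \<in> Xs n) \<and> (\<Sum>n=1..m. N n (x n)) > 0" for m x
    using that normk_eq_weighted_sum by blast
  show "xnorm N x = normk N x k + tail N x k"
    if h: "in_X Xs N x \<and> c > 0 \<and> (\<forall>n>k. N n (x n) / real n < c \<and> c \<le> normk N x k)"
    for x c k
  proof (rule xnorm_eq_normk_add_tail)
    have "c \<le> normk N x k" using h by auto
    then show "k \<ge> 1" using h by (cases k) auto
  qed (use h nonneg in \<open>auto simp: in_X_def intro: less_imp_le order_trans\<close>)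
  show "\<exists>k\<ge>1. xnorm N x = normk N x k + tail N x k"
    if h: "in_X Xs N x \<and> (\<exists>n\<ge>1. x n \<noteq> 0)" for x
  proof -
    obtain j where "j \<ge> 1" "x j \<noteq> 0" using h by blast
    then have "N j (x j) > 0" using h banach is_banach_on_norm_pos unfolding in_X_def by blast
    then show ?thesis
      using h nonneg \<open>j \<ge> 1\<close> by (intro xnorm_eq_normk_add_tail_eventually) (auto simp: in_X_def)
  qed
qed

end
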